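(* Let $r,n,s_1,\ldots,s_r\in\mathbb{N}$ (positive integers) with $r\leq n$. If $n\geq 2$, then $$\overline{H}_n^{\star}(s_1,\ldots,s_r)=\sum_{0\leq k_1\leq k_2\leq\cdots\leq k_r\leq n-1}\prod_{j=1}^{r}\frac{1}{(2k_j+1)^{s_j}}$$ is not an integer.
   Context: $\mathbb{N}$ denotes the set of positive integers. $\overline{H}_n^{\star}(s_1,\ldots,s_r)$ is called the odd multiple harmonic star sum. *)

theory Defs
  imports Complex_Main
begin

definition odd_mhs_star :: "nat \<Rightarrow> nat list \<Rightarrow> rat" where
  "odd_mhs_star n s =
     (\<Sum>k \<in> {k :: nat list. length k = length s \<and> sorted k \<and> (\<forall>i \<in> set k. i < n)}.
        \<Prod>j < length s. 1 / (of_nat (2 * k ! j + 1)) ^ (s ! j))"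

end

(* Let 3^a be the largest power of 3 below 2n; it is the only odd number up to 2n - 1
   divisible by 3^a.  After multiplying by 3^(a (s_1 + ... + s_r)), the term with
   k_1 = ... = k_r = (3^a - 1)/2 becomes 1, while every other term becomes 3 times an
   element of the local ring Z_(3).  Hence the scaled sum is not divisible by 3 in Z_(3),
   whereas it would be if the sum were an integer, since a >= 1 and r >= 1. *)

theory Submission
  imports Defs "HOL-Computational_Algebra.Primes"
begin

definition p_integral :: "nat \<Rightarrow> rat \<Rightarrow> bool" where
  "p_integral p x \<longleftrightarrow> (\<exists>(a::int) (b::nat). \<not> p dvd b \<and> x = of_int a / of_nat b)"

lemma p_integral_of_int: "p \<noteq> 1 \<Longrightarrow> p_integral p (of_int z)"
  unfolding p_integral_def by (rule exI[of _ z], rule exI[of _ 1]) simp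

lemma p_integral_mult:
  assumes "prime p" "p_integral p x" "p_integral p y"
  shows "p_integral p (x * y)"
proof -
  obtain a b c d where "\<not> p dvd b" "x = of_int a / of_nat b" "\<not> p dvd d" "y = of_int c / of_nat d"
    using assms(2,3) unfolding p_integral_def by blast
  with assms(1) show ?thesis
    unfolding p_integral_def
    by (intro exI[of _ "a * c"] exI[of _ "b * d"]) (simp add: prime_dvd_mult_iff)
qed

lemma p_integral_add:
  assumes "prime p" "p_integral p x" "p_integral p y"
  shows "p_integral p (x + y)"
proof -
  obtain a b c d where "\<not> p dvd b" "x = of_int a / of_nat b" "\<not> p dvd d" "y = of_int c / of_nat d"
    using assms(2,3) unfolding p_integral_def by blast
  moreover from this have "b \<noteq> 0" "d \<noteq> 0"
    by (metis dvd_0_right)+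
  ultimately show ?thesis
    using assms(1) unfolding p_integral_def
    by (intro exI[of _ "a * d + c * b"] exI[of _ "b * d"]) (simp add: prime_dvd_mult_iff field_simps)
qed

lemma p_integral_uminus: "p_integral p x \<Longrightarrow> p_integral p (- x)"
  unfolding p_integral_def by (metis minus_divide_left of_int_minus)

lemma p_integral_diff:
  "prime p \<Longrightarrow> p_integral p x \<Longrightarrow> p_integral p y \<Longrightarrow> p_integral p (x - y)"
  using p_integral_add p_integral_uminus by (metis diff_conv_add_uminus)

lemma p_integral_sum:
  assumes "prime p" "\<And>x. x \<in> A \<Longrightarrow> p_integral p (f x)"
  shows "p_integral p (sum f A)"
proof -
  have "p_integral p 0"
    using p_integral_of_int[of p 0] prime_gt_1_nat[OF assms(1)] by simp
  with assms show ?thesis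
    by (induction A rule: infinite_finite_induct) (auto intro: p_integral_add)
qed

lemma p_integral_prod:
  assumes "prime p" "\<And>x. x \<in> A \<Longrightarrow> p_integral p (f x)"
  shows "p_integral p (prod f A)"
proof -
  have "p_integral p 1"
    using p_integral_of_int[of p 1] prime_gt_1_nat[OF assms(1)] by simp
  with assms show ?thesis
    by (induction A rule: infinite_finite_induct) (auto intro: p_integral_mult)
qed

lemma p_integral_power: "prime p \<Longrightarrow> p_integral p x \<Longrightarrow> p_integral p (x ^ e)"
  using p_integral_prod[of p "{..<e}" "\<lambda>_. x"] by simp

lemma not_p_integral_inverse:
  assumes "prime p"
  shows "\<not> p_integral p (1 / of_nat p)"
proof
  assume "p_integral p (1 / of_nat p)"
  then obtain a b where b: "\<not> p dvd b" and eq: "1 / of_nat p = (of_int a / of_nat b :: rat)"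
    unfolding p_integral_def by blast
  have "p \<noteq> 0"
    using assms by auto
  moreover have "b \<noteq> 0"
    using b by (metis dvd_0_right)
  ultimately have "of_int (int b) = (of_int (int p * a) :: rat)"
    using eq by (simp add: field_simps)
  then have "int p dvd int b"
    by (metis dvd_triv_left of_int_eq_iff)
  with b show False
    by simp
qed

lemma p_integral_prime_power_div:
  assumes "prime p" "\<not> p ^ a dvd m"
  shows "p_integral p (of_nat p ^ a / of_nat m / of_nat p)"
proof -
  define v where "v = multiplicity p m"
  have "m \<noteq> 0"
    using assms(2) by (metis dvd_0_right)
  moreover have "\<not> is_unit p"
    using assms(1) by auto
  ultimately obtain u where u: "m = p ^ v * u" "\<not> p dvd u"
    unfolding v_def using multiplicity_decompose' by blast
  have "v < a"
    unfolding v_def using multiplicity_lessI[OF \<open>m \<noteq> 0\<close> \<open>\<not> is_unit p\<close> assms(2)] .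
  then have "(of_nat p ^ a :: rat) = of_nat p ^ ((a - Suc v) + v + 1)"
    by simp
  also have "\<dots> = of_nat p ^ (a - Suc v) * of_nat p ^ v * of_nat p"
    by (simp only: power_add power_one_right)
  finally have "of_nat p ^ a / of_nat m / of_nat p = (of_int (int p ^ (a - Suc v)) / of_nat u :: rat)"
    using u \<open>m \<noteq> 0\<close> assms(1) by (simp add: prime_gt_0_nat)
  with u(2) show ?thesis
    unfolding p_integral_def by blast
qed

lemma not_p_integral_sum:
  assumes "prime p" "finite K" "k0 \<in> K" "\<not> p_integral p (f k0)"
    and "\<And>k. k \<in> K - {k0} \<Longrightarrow> p_integral p (f k)"
  shows "\<not> p_integral p (sum f K)"
proof
  assume "p_integral p (sum f K)"
  moreover have "p_integral p (sum f (K - {k0}))"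
    using assms(1,5) by (rule p_integral_sum)
  ultimately have "p_integral p (sum f K - sum f (K - {k0}))"
    using assms(1) by (rule p_integral_diff[rotated])
  moreover have "sum f K - sum f (K - {k0}) = f k0"
    using assms(2,3) by (simp add: sum.remove)
  ultimately show False
    using assms(4) by simp
qed

lemma p_integral_prod_prime_power_div:
  assumes "prime p" "finite J" "j \<in> J" "e j \<noteq> 0"
    and "\<And>i. i \<in> J \<Longrightarrow> \<not> p ^ Suc a dvd m i" and "\<not> p ^ a dvd m j"
  shows "p_integral p ((\<Prod>i\<in>J. (of_nat p ^ a / of_nat (m i)) ^ e i) / of_nat p)"
proof -
  define q where "q i = (of_nat p ^ a / of_nat (m i) :: rat)" for i
  have q: "p_integral p (q i)" if "i \<in> J" for i
    using p_integral_prime_power_div[OF assms(1) assms(5)[OF that]] assms(1)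
    by (simp add: q_def prime_gt_0_nat)
  have split: "(\<Prod>i\<in>J. q i ^ e i) / of_nat p =
      q j / of_nat p * q j ^ (e j - 1) * (\<Prod>i\<in>J - {j}. q i ^ e i)"
    using assms(2-4) by (simp add: prod.remove power_eq_if)
  have "p_integral p (q j / of_nat p)"
    unfolding q_def using assms(1,6) by (rule p_integral_prime_power_div)
  then show ?thesis
    unfolding q_def[symmetric] split using assms(1,3) q
    by (intro p_integral_mult p_integral_power p_integral_prod) auto
qed

lemma odd_dvd_less_three_power_eq:
  fixes m :: nat
  assumes "odd m" "m < 3 ^ Suc a" "3 ^ a dvd m"
  shows "m = 3 ^ a"
proof -
  obtain t where t: "m = 3 ^ a * t"
    using assms(3) ..
  with assms(1,2) have "odd t" "t < 3"
    by auto
  then have "t = 1"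
    by presburger
  with t show ?thesis
    by simp
qed

lemma power_sum_mult_odd_mhs_star:
  "x ^ sum_list s * odd_mhs_star n s =
     (\<Sum>k | length k = length s \<and> sorted k \<and> (\<forall>i \<in> set k. i < n).
        \<Prod>j < length s. (x / of_nat (2 * k ! j + 1)) ^ (s ! j))"
  by (simp add: odd_mhs_star_def sum_list_sum_nth atLeast0LessThan power_sum sum_distrib_left
      prod.distrib[symmetric] power_divide)

lemma p_integral_odd_term_div_three:
  assumes "length k = length s" "\<forall>e \<in> set s. 1 \<le> e" "\<forall>i \<in> set k. 2 * i + 1 < 3 ^ Suc a"
    and "3 ^ a = 2 * c + 1" "k \<noteq> replicate (length s) c"
  shows "p_integral 3 ((\<Prod>j < length s. (3 ^ a / of_nat (2 * k ! j + 1)) ^ (s ! j)) / 3)"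
proof -
  obtain j where j: "j < length s" "k ! j \<noteq> c"
    using assms(1,5) by (metis in_set_conv_nth replicate_eqI)
  have "\<not> 3 ^ Suc a dvd 2 * k ! i + 1" if "i < length s" for i
  proof -
    have "2 * k ! i + 1 < 3 ^ Suc a"
      using assms(1,3) that by (metis nth_mem)
    then show ?thesis
      by (auto dest: nat_dvd_not_less)
  qed
  moreover have "\<not> 3 ^ a dvd 2 * k ! j + 1"
    using odd_dvd_less_three_power_eq[of "2 * k ! j + 1" a] assms(1,3,4) j by auto
  moreover have "s ! j \<noteq> 0"
    using assms(2) j(1) by (metis nth_mem not_one_le_zero)
  ultimately show ?thesis
    using p_integral_prod_prime_power_div[of 3 "{..<length s}" j "\<lambda>i. s ! i" a
        "\<lambda>i. 2 * k ! i + 1"] j(1)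
    by simp
qed

lemma not_p_integral_scaled_odd_mhs_star:
  assumes "\<forall>e \<in> set s. 1 \<le> e" "3 ^ a \<le> 2 * n - 1" "2 * n - 1 < 3 ^ Suc a"
  shows "\<not> p_integral 3 ((3 ^ a) ^ sum_list s * odd_mhs_star n s / 3)"
proof -
  define K where "K = {k :: nat list. length k = length s \<and> sorted k \<and> (\<forall>i \<in> set k. i < n)}"
  define f where "f k = (\<Prod>j < length s. (3 ^ a / of_nat (2 * k ! j + 1)) ^ (s ! j)) / (3 :: rat)"
    for k
  have "odd (3 ^ a :: nat)"
    by simp
  then obtain c :: nat where c: "3 ^ a = 2 * c + 1"
    by (rule oddE)
  have "\<not> p_integral 3 (sum f K)"
  proof (rule not_p_integral_sum)
    show "finite K"
      unfolding K_def by (rule finite_subset[OF _ finite_lists_length_eq[of "{..<n}"]]) auto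
    show "replicate (length s) c \<in> K"
      using assms(2) c unfolding K_def by (auto simp: sorted_replicate)
    have "of_nat (2 * c + 1) = (3 ^ a :: rat)"
      unfolding c[symmetric] by simp
    then show "\<not> p_integral 3 (f (replicate (length s) c))"
      using not_p_integral_inverse[of 3] by (simp add: f_def)
    show "p_integral 3 (f k)" if k: "k \<in> K - {replicate (length s) c}" for k
    proof -
      have "\<forall>i \<in> set k. 2 * i + 1 < 3 ^ Suc a"
        using k assms(3) unfolding K_def by fastforce
      then show ?thesis
        using k c assms(1) p_integral_odd_term_div_three[of k s a c] unfolding K_def f_def by auto
    qed
  qed simp
  moreover have "sum f K = (3 ^ a) ^ sum_list s * odd_mhs_star n s / 3"
    unfolding power_sum_mult_odd_mhs_star f_def K_def by (rule sum_divide_distrib[symmetric])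
  ultimately show ?thesis
    by simp
qed

theorem theorem1p1:
  fixes n :: nat and s :: "nat list"
  assumes "1 \<le> length s" and "length s \<le> n" and "\<forall>j \<in> set s. 1 \<le> j"
    and "2 \<le> n"
  shows "odd_mhs_star n s \<notin> \<int>"
proof
  assume "odd_mhs_star n s \<in> \<int>"
  then obtain z where z: "odd_mhs_star n s = of_int z"
    by (elim Ints_cases)
  have "1 \<le> 2 * n - 1"
    using assms(4) by simp
  then obtain a where a: "3 ^ a \<le> 2 * n - 1" "2 * n - 1 < 3 ^ Suc a"
    using ex_power_ivl1[of 3] by auto
  have "0 < a"
    using a(2) assms(4) by (cases a) auto
  moreover have "0 < sum_list s"
    using assms(1,3) by (cases s) auto
  ultimately obtain m where m: "a * sum_list s = Suc m"
    by (metis mult_is_0 neq0_conv not0_implies_Suc)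
  have "(3 ^ a) ^ sum_list s * odd_mhs_star n s / 3 = of_int (3 ^ m * z)"
    unfolding power_mult[symmetric] m z by simp
  moreover have "p_integral 3 (of_int (3 ^ m * z))"
    by (simp add: p_integral_of_int del: of_int_mult of_int_power)
  ultimately show False
    using not_p_integral_scaled_odd_mhs_star[OF assms(3) a] by simp
qed

end
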